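(* In the setting described in the context, for all $g,g'\in\mathcal{G}$, $$(g'\circ g)_\star\nu=g'_\star\big(g_\star\nu\big).$$
   Context: Let $(\mathcal{X},\Sigma)$ be a measurable space, $\Phi^t$ a flow on $\mathcal{X}$ (bijective measurable maps, $\Phi^{t_1}\circ\Phi^{t_2}=\Phi^{t_1+t_2}$, jointly measurable), $f_\sharp$ push-forward, $\mu$ an invariant probability measure ($\Phi^t_\sharp\mu=\mu$ for all $t$). Let $h^a$, $a>0$, be bijective measurable maps and $\mathcal{G}$ a group of bijective measurable maps of $\mathcal{X}$ with $h^{a_1}\circ h^{a_2}=h^{a_1a_2}$, $\Phi^t\circ g=g\circ\Phi^t$, $g\circ h^a=h^a\circ g$, $\Phi^t\circ h^a=h^a\circ\Phi^{t/a}$ for all $a,a_1,a_2>0$, $t$, $g\in\mathcal{G}$. $\mathcal{Y}\subset\mathcal{X}$ is a representative set: for every $x$ there is a unique $a=A(x)>0$ with $h^a(x)\in\mathcal{Y}$, $A$ measurable with $\int A\,d\mu<\infty$; $P(x)=h^{A(x)}(x)$. Standing assumption: $\int A\circ g\,d\mu<\infty$ for every $g\in\mathcal{G}$. For a measure $\rho$ and positive measurable $B$ with $0<\int B\,d\rho<\infty$, $\rho_B$ is the probability measure with $d\rho_B/d\rho=B/\int B\,d\rho$. Let $\nu=P_\sharp\mu_A$ (the invariant measure of the normalized flow $P\circ\Phi^\tau_A$ on $\mathcal{Y}$). For $g\in\mathcal{G}$ and a probability measure $\rho$ on $\mathcal{Y}$ with $\int A\circ g\,d\rho<\infty$, define $g_\star\rho=(P\circ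 g)_\sharp\rho_{A\circ g}$; under the standing assumption, all measures in the claim are well defined. *)

theory Defs
  imports "HOL-Probability.Probability"
begin

definition reweight :: "'a measure \<Rightarrow> ('a \<Rightarrow> real) \<Rightarrow> 'a measure" where
  "reweight \<rho> B = density \<rho> (\<lambda>x. ennreal (B x / (\<integral>y. B y \<partial>\<rho>)))"

definition proj :: "(real \<Rightarrow> 'a \<Rightarrow> 'a) \<Rightarrow> ('a \<Rightarrow> real) \<Rightarrow> 'a \<Rightarrow> 'a" where
  "proj h A x = h (A x) x"

definition gstar :: "'a measure \<Rightarrow> (real \<Rightarrow> 'a \<Rightarrow> 'a) \<Rightarrow> ('a \<Rightarrow> real) \<Rightarrow> ('a \<Rightarrow> 'a)
    \<Rightarrow> 'a measure \<Rightarrow> 'a measure" where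
  "gstar M h A g \<rho> = distr (reweight \<rho> (A \<circ> g)) M (proj h A \<circ> g)"

end

theory Submission
  imports Defs
begin

(* Reweighting a push-forward and pushing forward again collapses into a single push-forward
   of one reweighting, with the product of the two densities.
   Since A is homogeneous of degree -1 along h and every g in G commutes with h, we have
   A (g (P x)) * A x = A (g x) and P (g (P x)) = P (g x); hence g_star maps the measure
   (P \<circ> k)_# \<mu>_(A \<circ> k) to (P \<circ> g \<circ> k)_# \<mu>_(A \<circ> g \<circ> k). As \<nu> is the case k = id, both sides
   of the claim equal (P \<circ> g' \<circ> g)_# \<mu>_(A \<circ> g' \<circ> g). *)

lemma reweight_cong:
  assumes "\<And>x. x \<in> space \<rho> \<Longrightarrow> B x = B' x"
  shows "reweight \<rho> B = reweight \<rho> B'"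
proof -
  have "(\<integral>x. B x \<partial>\<rho>) = (\<integral>x. B' x \<partial>\<rho>)"
    using assms by (rule Bochner_Integration.integral_cong[OF refl])
  then show ?thesis
    unfolding reweight_def density_def using assms by (simp cong: nn_integral_cong)
qed

lemma distr_reweight_reweight:
  fixes B :: "'a \<Rightarrow> real" and C :: "'b \<Rightarrow> real"
  assumes T: "T \<in> \<rho> \<rightarrow>\<^sub>M N" and S: "S \<in> N \<rightarrow>\<^sub>M K"
    and B: "B \<in> borel_measurable \<rho>" and C: "C \<in> borel_measurable N"
    and B_nonneg: "\<And>x. x \<in> space \<rho> \<Longrightarrow> 0 \<le> B x"
    and C_nonneg: "\<And>y. y \<in> space N \<Longrightarrow> 0 \<le> C y"
    and B_integral_pos: "0 < (\<integral>x. B x \<partial>\<rho>)"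
  shows "distr (reweight (distr (reweight \<rho> B) N T) C) K S
       = distr (reweight \<rho> (\<lambda>x. B x * C (T x))) K (S \<circ> T)"
proof -
  note [measurable] = T S B C
  define b where "b = (\<integral>x. B x \<partial>\<rho>)"
  define d where "d = (\<integral>x. B x * C (T x) \<partial>\<rho>)"
  have b_pos: "0 < b" using B_integral_pos by (simp add: b_def)
  have CT_nonneg: "0 \<le> C (T x)" if "x \<in> space \<rho>" for x
    using C_nonneg measurable_space[OF T that] .
  have d_nonneg: "0 \<le> d"
    unfolding d_def using B_nonneg CT_nonneg by (simp add: integral_nonneg)
  have C_integral: "(\<integral>y. C y \<partial>distr (reweight \<rho> B) N T) = d / b"
  proof -
    have "(\<integral>y. C y \<partial>distr (reweight \<rho> B) N T) = (\<integral>x. C (T x) \<partial>reweight \<rho> B)"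
      by (rule integral_distr) (simp_all add: reweight_def)
    also have "\<dots> = (\<integral>x. B x / b * C (T x) \<partial>\<rho>)"
      unfolding reweight_def b_def[symmetric]
      by (subst integral_density) (use B_nonneg b_pos in auto)
    also have "\<dots> = d / b"
      by (simp add: d_def)
    finally show ?thesis .
  qed
  have density_product: "ennreal (B x / b) * ennreal (C (T x) / (d / b)) = ennreal (B x * C (T x) / d)"
    if "x \<in> space \<rho>" for x
    using B_nonneg[OF that] CT_nonneg[OF that] b_pos d_nonneg
    by (simp add: ennreal_mult[symmetric] field_simps)
  have "reweight (distr (reweight \<rho> B) N T) C
      = density (distr (density \<rho> (\<lambda>x. ennreal (B x / b))) N T) (\<lambda>y. ennreal (C y / (d / b)))"
    by (simp add: reweight_def[of "distr _ N T"] C_integral) (simp add: reweight_def b_def)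
  also have "\<dots> = distr (density \<rho> (\<lambda>x. ennreal (B x / b) * ennreal (C (T x) / (d / b)))) N T"
    by (simp add: density_distr density_density_eq)
  also have "\<dots> = distr (reweight \<rho> (\<lambda>x. B x * C (T x))) N T"
    unfolding reweight_def d_def[symmetric]
    by (intro distr_cong density_cong AE_I2 density_product) simp_all
  finally show ?thesis
    by (simp add: distr_distr reweight_def)
qed

locale representative_set =
  fixes M :: "'a measure" and h :: "real \<Rightarrow> 'a \<Rightarrow> 'a" and Y :: "'a set" and A :: "'a \<Rightarrow> real"
  assumes h_closed: "\<And>a x. a > 0 \<Longrightarrow> x \<in> space M \<Longrightarrow> h a x \<in> space M"
    and h_comp: "\<And>a1 a2 x. a1 > 0 \<Longrightarrow> a2 > 0 \<Longrightarrow> x \<in> space M \<Longrightarrow> h a1 (h a2 x) = h (a1 * a2) x"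
    and A_pos: "\<And>x. x \<in> space M \<Longrightarrow> A x > 0"
    and A_rep: "\<And>x. x \<in> space M \<Longrightarrow> h (A x) x \<in> Y"
    and A_unique: "\<And>x a. x \<in> space M \<Longrightarrow> a > 0 \<Longrightarrow> h a x \<in> Y \<Longrightarrow> a = A x"
begin

lemma A_scale:
  assumes x: "x \<in> space M" and a: "a > 0"
  shows "A (h a x) = A x / a"
proof -
  have "h (A x / a) (h a x) = h (A x) x"
    using h_comp[of "A x / a" a x] a A_pos[OF x] x by simp
  then show ?thesis
    using A_unique[OF h_closed[OF a x], of "A x / a"] A_rep[OF x] a A_pos[OF x] by simp
qed

lemma proj_scale:
  assumes x: "x \<in> space M" and a: "a > 0"
  shows "proj h A (h a x) = proj h A x"
  using h_comp[of "A x / a" a x] a A_pos[OF x] x A_scale[OF x a] by (simp add: proj_def)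

context
  fixes g :: "'a \<Rightarrow> 'a"
  assumes g_closed: "\<And>x. x \<in> space M \<Longrightarrow> g x \<in> space M"
    and g_h: "\<And>a x. a > 0 \<Longrightarrow> x \<in> space M \<Longrightarrow> g (h a x) = h a (g x)"
begin

lemma g_proj: "x \<in> space M \<Longrightarrow> g (proj h A x) = h (A x) (g x)"
  using g_h A_pos by (simp add: proj_def)

lemma A_g_proj: "x \<in> space M \<Longrightarrow> A (g (proj h A x)) = A (g x) / A x"
  using g_proj A_scale g_closed A_pos by simp

lemma proj_g_proj: "x \<in> space M \<Longrightarrow> proj h A (g (proj h A x)) = proj h A (g x)"
  using g_proj proj_scale g_closed A_pos by simp

end

lemma gstar_distr_reweight:
  assumes \<mu>: "prob_space \<mu>" "sets \<mu> = sets M"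
    and A_meas: "A \<in> borel_measurable M" and P_meas: "proj h A \<in> M \<rightarrow>\<^sub>M M"
    and g_meas: "g \<in> M \<rightarrow>\<^sub>M M"
    and g_h: "\<And>a x. a > 0 \<Longrightarrow> x \<in> space M \<Longrightarrow> g (h a x) = h a (g x)"
    and k_meas: "k \<in> M \<rightarrow>\<^sub>M M" and k_int: "integrable \<mu> (A \<circ> k)"
  shows "gstar M h A g (distr (reweight \<mu> (A \<circ> k)) M (proj h A \<circ> k))
       = distr (reweight \<mu> (A \<circ> (g \<circ> k))) M (proj h A \<circ> (g \<circ> k))"
proof -
  interpret prob_space \<mu> by (rule \<mu>(1))
  have space_\<mu>: "space \<mu> = space M" using \<mu>(2) by (rule sets_eq_imp_space_eq)
  have measurable_\<mu>: "measurable \<mu> N = measurable M N" for N :: "'b measure"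
    using \<mu>(2) by (rule measurable_cong_sets) simp
  have k_closed: "k x \<in> space M" if "x \<in> space M" for x
    using measurable_space[OF k_meas that] .
  have A_k_pos: "0 < A (k x)" if "x \<in> space M" for x
    using A_pos k_closed that by simp
  have g_closed: "g x \<in> space M" if "x \<in> space M" for x
    using measurable_space[OF g_meas that] .
  have A_k_integral_pos: "0 < (\<integral>x. (A \<circ> k) x \<partial>\<mu>)"
  proof -
    have "AE x in \<mu>. 0 < (A \<circ> k) x"
      using A_k_pos by (intro AE_I2) (simp add: space_\<mu>)
    then show ?thesis
      using integral_less_AE_space[of "\<lambda>_. 0" "A \<circ> k"] k_int by (simp add: emeasure_space_1 comp_def)
  qed
  have "gstar M h A g (distr (reweight \<mu> (A \<circ> k)) M (proj h A \<circ> k))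
      = distr (reweight \<mu> (\<lambda>x. (A \<circ> k) x * (A \<circ> g) ((proj h A \<circ> k) x))) M (proj h A \<circ> g \<circ> (proj h A \<circ> k))"
    unfolding gstar_def
    by (rule distr_reweight_reweight)
      (use A_k_integral_pos A_pos k_closed g_closed in \<open>auto simp: measurable_\<mu> space_\<mu> less_imp_le
        intro: measurable_comp[OF k_meas] measurable_comp[OF g_meas] A_meas P_meas\<close>)
  also have "\<dots> = distr (reweight \<mu> (A \<circ> (g \<circ> k))) M (proj h A \<circ> (g \<circ> k))"
    using A_k_pos[THEN less_imp_neq, symmetric] k_closed A_g_proj[OF g_closed g_h] proj_g_proj[OF g_closed g_h]
    by (intro distr_cong reweight_cong) (simp_all add: space_\<mu> reweight_def)
  finally show ?thesis .
qed

end

theorem corollary1: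
  fixes M :: "'a measure" and \<mu> :: "'a measure"
    and \<Phi> :: "real \<Rightarrow> 'a \<Rightarrow> 'a" and h :: "real \<Rightarrow> 'a \<Rightarrow> 'a"
    and G :: "('a \<Rightarrow> 'a) set" and Y :: "'a set" and A :: "'a \<Rightarrow> real"
  assumes flow_meas: "\<And>t. \<Phi> t \<in> M \<rightarrow>\<^sub>M M"
    and flow_bij: "\<And>t. bij_betw (\<Phi> t) (space M) (space M)"
    and flow_comp: "\<And>t1 t2 x. x \<in> space M \<Longrightarrow> \<Phi> t1 (\<Phi> t2 x) = \<Phi> (t1 + t2) x"
    and flow_joint: "(\<lambda>(t, x). \<Phi> t x) \<in> (borel \<Otimes>\<^sub>M M) \<rightarrow>\<^sub>M M"
    and mu_prob: "prob_space \<mu>" and mu_sets: "sets \<mu> = sets M"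
    and mu_inv: "\<And>t. distr \<mu> M (\<Phi> t) = \<mu>"
    and h_meas: "\<And>a. a > 0 \<Longrightarrow> h a \<in> M \<rightarrow>\<^sub>M M"
    and h_bij: "\<And>a. a > 0 \<Longrightarrow> bij_betw (h a) (space M) (space M)"
    and h_comp: "\<And>a1 a2 x. a1 > 0 \<Longrightarrow> a2 > 0 \<Longrightarrow> x \<in> space M \<Longrightarrow> h a1 (h a2 x) = h (a1 * a2) x"
    and G_meas: "\<And>g. g \<in> G \<Longrightarrow> g \<in> M \<rightarrow>\<^sub>M M"
    and G_bij: "\<And>g. g \<in> G \<Longrightarrow> bij_betw g (space M) (space M)"
    and G_id: "id \<in> G"
    and G_comp: "\<And>g1 g2. g1 \<in> G \<Longrightarrow> g2 \<in> G \<Longrightarrow> g1 \<circ> g2 \<in> G"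
    and G_inv: "\<And>g. g \<in> G \<Longrightarrow> \<exists>g'\<in>G. \<forall>x\<in>space M. g' (g x) = x \<and> g (g' x) = x"
    and flow_G: "\<And>t g x. g \<in> G \<Longrightarrow> x \<in> space M \<Longrightarrow> \<Phi> t (g x) = g (\<Phi> t x)"
    and h_G: "\<And>a g x. a > 0 \<Longrightarrow> g \<in> G \<Longrightarrow> x \<in> space M \<Longrightarrow> g (h a x) = h a (g x)"
    and flow_h: "\<And>t a x. a > 0 \<Longrightarrow> x \<in> space M \<Longrightarrow> \<Phi> t (h a x) = h a (\<Phi> (t / a) x)"
    and Y_sets: "Y \<in> sets M"
    and A_meas: "A \<in> borel_measurable M"
    and A_pos: "\<And>x. x \<in> space M \<Longrightarrow> A x > 0"
    and A_rep: "\<And>x. x \<in> space M \<Longrightarrow> h (A x) x \<in> Y"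
    and A_unique: "\<And>x a. x \<in> space M \<Longrightarrow> a > 0 \<Longrightarrow> h a x \<in> Y \<Longrightarrow> a = A x"
    and P_meas: "proj h A \<in> M \<rightarrow>\<^sub>M M"
    and A_int: "integrable \<mu> A"
    and A_g_int: "\<And>g. g \<in> G \<Longrightarrow> integrable \<mu> (A \<circ> g)"
    and g: "g \<in> G" and g': "g' \<in> G"
  shows "gstar M h A (g' \<circ> g) (distr (reweight \<mu> A) M (proj h A))
       = gstar M h A g' (gstar M h A g (distr (reweight \<mu> A) M (proj h A)))"
proof -
  interpret representative_set M h Y A
    by unfold_locales (simp_all add: measurable_space[OF h_meas] h_comp A_pos A_rep A_unique)
  have gstar_G: "gstar M h A g1 (distr (reweight \<mu> (A \<circ> k)) M (proj h A \<circ> k))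
      = distr (reweight \<mu> (A \<circ> (g1 \<circ> k))) M (proj h A \<circ> (g1 \<circ> k))"
    if g1: "g1 \<in> G" and k: "k \<in> G" for g1 k
    by (rule gstar_distr_reweight[OF mu_prob mu_sets A_meas P_meas G_meas[OF g1] h_G[OF _ g1]
          G_meas[OF k] A_g_int[OF k]])
  let ?\<nu> = "distr (reweight \<mu> A) M (proj h A)"
  have "gstar M h A (g' \<circ> g) ?\<nu> = distr (reweight \<mu> (A \<circ> (g' \<circ> g))) M (proj h A \<circ> (g' \<circ> g))"
    using gstar_G[OF G_comp[OF g' g] G_id] by simp
  also have "\<dots> = gstar M h A g' (distr (reweight \<mu> (A \<circ> g)) M (proj h A \<circ> g))"
    using gstar_G[OF g' g] by simp
  also have "\<dots> = gstar M h A g' (gstar M h A g ?\<nu>)"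
    using gstar_G[OF g G_id] by simp
  finally show ?thesis .
qed

end
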